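(* Let $A$ be a $\sigma$-unital $C^*$-algebra, $E_A$ a countably generated Hilbert $C^*$-module, $\gamma_0\in\operatorname{End}_A(E)$ a self-adjoint unitary and $u\in\operatorname{End}_A(E)$ a unitary with $\gamma_0u\gamma_0=u^*$. If $\|u+u^*\|_{\mathcal{Q}_A(E)}<2$, then $\frac{1}{2i}(u-u^* )$ is a self-adjoint Fredholm operator in $\operatorname{End}_A(E)$ that anti-commutes with $\gamma_0$.
   Context: $\operatorname{End}_A(E)$ denotes the adjointable operators and $\mathbb{K}_A(E)$ the compact operators. $\mathcal{Q}_A(E)=\operatorname{End}_A(E)/\mathbb{K}_A(E)$ with quotient $\pi$, and $\|S\|_{\mathcal{Q}_A(E)}=\|\pi(S)\|$. An operator $T\in\operatorname{End}_A(E)$ is Fredholm if $\pi(T)$ is invertible. *)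

theory Defs
  imports "HOL-Analysis.Analysis"
begin

text \<open>A C*-algebra: a (not necessarily unital) real Banach algebra with a compatible
complex scalar multiplication sm, and an involution st satisfying the C*-identity.\<close>
definition cstar_algebra ::
  "('a::{real_normed_algebra,banach} \<Rightarrow> 'a) \<Rightarrow> (complex \<Rightarrow> 'a \<Rightarrow> 'a) \<Rightarrow> bool" where
  "cstar_algebra st sm \<longleftrightarrow>
     (\<forall>r x. sm (complex_of_real r) x = scaleR r x) \<and>
     (\<forall>c d x. sm (c + d) x = sm c x + sm d x) \<and>
     (\<forall>c x y. sm c (x + y) = sm c x + sm c y) \<and>
     (\<forall>c d x. sm (c * d) x = sm c (sm d x)) \<and>
     (\<forall>c x y. sm c (x * y) = sm c x * y \<and> sm c (x * y) = x * sm c y) \<and>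
     (\<forall>c x. norm (sm c x) = cmod c * norm x) \<and>
     (\<forall>x. st (st x) = x) \<and>
     (\<forall>x y. st (x + y) = st x + st y) \<and>
     (\<forall>c x. st (sm c x) = sm (cnj c) (st x)) \<and>
     (\<forall>x y. st (x * y) = st y * st x) \<and>
     (\<forall>x. norm (st x * x) = (norm x)\<^sup>2)"

definition cstar_positive :: "('a::{real_normed_algebra,banach} \<Rightarrow> 'a) \<Rightarrow> 'a \<Rightarrow> bool" where
  "cstar_positive st x \<longleftrightarrow> (\<exists>y. x = st y * y)"

definition sigma_unital :: "('a::{real_normed_algebra,banach} \<Rightarrow> 'a) \<Rightarrow> bool" where
  "sigma_unital st \<longleftrightarrow>
     (\<exists>e :: nat \<Rightarrow> 'a. (\<forall>n. cstar_positive st (e n) \<and> norm (e n) \<le> 1) \<and>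
        (\<forall>a. (\<lambda>n. e n * a) \<longlonglongrightarrow> a \<and> (\<lambda>n. a * e n) \<longlonglongrightarrow> a))"

text \<open>A (right) Hilbert C*-module E over the C*-algebra A.  rm is the right action,
ip the A-valued inner product (linear in the second variable), smE the complex scalar
multiplication on E. Completeness of E is the class banach, with the norm induced by ip.\<close>
definition hilbert_module ::
  "('a::{real_normed_algebra,banach} \<Rightarrow> 'a) \<Rightarrow> (complex \<Rightarrow> 'a \<Rightarrow> 'a) \<Rightarrow>
   ('e::banach \<Rightarrow> 'a \<Rightarrow> 'e) \<Rightarrow> ('e \<Rightarrow> 'e \<Rightarrow> 'a) \<Rightarrow> (complex \<Rightarrow> 'e \<Rightarrow> 'e) \<Rightarrow> bool" where
  "hilbert_module st smA rm ip smE \<longleftrightarrow>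
     cstar_algebra st smA \<and>
     (\<forall>r x. smE (complex_of_real r) x = scaleR r x) \<and>
     (\<forall>c d x. smE (c + d) x = smE c x + smE d x) \<and>
     (\<forall>c x y. smE c (x + y) = smE c x + smE c y) \<and>
     (\<forall>c d x. smE (c * d) x = smE c (smE d x)) \<and>
     (\<forall>x y a. rm (x + y) a = rm x a + rm y a) \<and>
     (\<forall>x a b. rm x (a + b) = rm x a + rm x b) \<and>
     (\<forall>x a b. rm x (a * b) = rm (rm x a) b) \<and>
     (\<forall>c x a. rm (smE c x) a = smE c (rm x a)) \<and>
     (\<forall>c x a. rm x (smA c a) = smE c (rm x a)) \<and>
     (\<forall>x y z. ip x (y + z) = ip x y + ip x z) \<and>
     (\<forall>c x y. ip x (smE c y) = smA c (ip x y)) \<and>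
     (\<forall>x y a. ip x (rm y a) = ip x y * a) \<and>
     (\<forall>x y. st (ip x y) = ip y x) \<and>
     (\<forall>x. cstar_positive st (ip x x)) \<and>
     (\<forall>x. ip x x = 0 \<longrightarrow> x = 0) \<and>
     (\<forall>x. norm x = sqrt (norm (ip x x)))"

definition countably_generated :: "('e::banach \<Rightarrow> 'a \<Rightarrow> 'e) \<Rightarrow> bool" where
  "countably_generated rm \<longleftrightarrow>
     (\<exists>G. countable G \<and> closure (span {rm g a | g a. g \<in> G}) = UNIV)"

definition adjointable :: "('e \<Rightarrow> 'e \<Rightarrow> 'a) \<Rightarrow> ('e \<Rightarrow> 'e) \<Rightarrow> bool" where
  "adjointable ip T \<longleftrightarrow> (\<exists>T'. \<forall>x y. ip (T x) y = ip x (T' y))"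

definition adjoint :: "('e \<Rightarrow> 'e \<Rightarrow> 'a) \<Rightarrow> ('e \<Rightarrow> 'e) \<Rightarrow> ('e \<Rightarrow> 'e)" where
  "adjoint ip T = (SOME T'. \<forall>x y. ip (T x) y = ip x (T' y))"

definition unitary_op :: "('e \<Rightarrow> 'e \<Rightarrow> 'a) \<Rightarrow> ('e \<Rightarrow> 'e) \<Rightarrow> bool" where
  "unitary_op ip u \<longleftrightarrow> adjointable ip u \<and>
     (\<forall>x. adjoint ip u (u x) = x) \<and> (\<forall>x. u (adjoint ip u x) = x)"

definition selfadjoint_op :: "('e \<Rightarrow> 'e \<Rightarrow> 'a) \<Rightarrow> ('e \<Rightarrow> 'e) \<Rightarrow> bool" where
  "selfadjoint_op ip T \<longleftrightarrow> adjointable ip T \<and> adjoint ip T = T"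

definition finite_rank_op :: "('e \<Rightarrow> 'a \<Rightarrow> 'e) \<Rightarrow> ('e \<Rightarrow> 'e \<Rightarrow> 'a) \<Rightarrow> ('e::real_normed_vector \<Rightarrow> 'e) \<Rightarrow> bool" where
  "finite_rank_op rm ip F \<longleftrightarrow>
     (\<exists>xs :: ('e \<times> 'e) list. F = (\<lambda>z. sum_list (map (\<lambda>(x, y). rm x (ip y z)) xs)))"

definition compact_op :: "('e \<Rightarrow> 'a \<Rightarrow> 'e) \<Rightarrow> ('e \<Rightarrow> 'e \<Rightarrow> 'a) \<Rightarrow> ('e::real_normed_vector \<Rightarrow> 'e) \<Rightarrow> bool" where
  "compact_op rm ip T \<longleftrightarrow> adjointable ip T \<and>
     (\<forall>\<epsilon>>0. \<exists>F. finite_rank_op rm ip F \<and> onorm (\<lambda>z. T z - F z) < \<epsilon>)"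

definition calkin_norm :: "('e \<Rightarrow> 'a \<Rightarrow> 'e) \<Rightarrow> ('e \<Rightarrow> 'e \<Rightarrow> 'a) \<Rightarrow> ('e::real_normed_vector \<Rightarrow> 'e) \<Rightarrow> real" where
  "calkin_norm rm ip S = Inf {onorm (\<lambda>z. S z + K z) | K. compact_op rm ip K}"

definition fredholm_op :: "('e \<Rightarrow> 'a \<Rightarrow> 'e) \<Rightarrow> ('e \<Rightarrow> 'e \<Rightarrow> 'a) \<Rightarrow> ('e::real_normed_vector \<Rightarrow> 'e) \<Rightarrow> bool" where
  "fredholm_op rm ip T \<longleftrightarrow> adjointable ip T \<and>
     (\<exists>S. adjointable ip S \<and> compact_op rm ip (\<lambda>x. S (T x) - x) \<and> compact_op rm ip (\<lambda>x. T (S x) - x))"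

end

theory Submission
  imports Defs
begin

text \<open>Put T = (u - u*)/2i and R = (u + u*)/2. For a unitary u one has T^2 + R^2 = 1, and
\<gamma>0 u \<gamma>0 = u* makes \<gamma>0 anticommute with T. If R has Calkin norm below 1, there is a compact K
with norm (R + K) < 1, so 1 - (R + K)^2 is invertible by a Neumann series; as T^2 differs from
it by a compact operator, T^2 and hence T are invertible modulo compacts.\<close>

definition theta_sum ::
  "('e \<Rightarrow> 'a \<Rightarrow> 'e) \<Rightarrow> ('e \<Rightarrow> 'e \<Rightarrow> 'a) \<Rightarrow> ('e \<times> 'e) list \<Rightarrow> 'e \<Rightarrow> 'e::monoid_add"
  where "theta_sum rm ip xs z = (\<Sum>(x, y)\<leftarrow>xs. rm x (ip y z))"

lemma finite_rank_op_iff_theta_sum: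
  "finite_rank_op rm ip F \<longleftrightarrow> (\<exists>xs. F = theta_sum rm ip xs)"
  unfolding finite_rank_op_def theta_sum_def by (simp add: fun_eq_iff)

lemma theta_sum_Nil [simp]: "theta_sum rm ip [] z = 0"
  and theta_sum_Cons [simp]:
    "theta_sum rm ip ((x, y) # xs) z = rm x (ip y z) + theta_sum rm ip xs z"
  and theta_sum_append:
    "theta_sum rm ip (xs @ ys) z = theta_sum rm ip xs z + theta_sum rm ip ys z"
  by (simp_all add: theta_sum_def)

lemma Baire_closed_cover_ball:
  fixes F :: "nat \<Rightarrow> 'a::complete_space set"
  assumes "\<And>n. closed (F n)" and "(\<Union>n. F n) = UNIV"
  obtains n y r where "r > 0" "ball y r \<subseteq> F n"
proof -
  have "\<exists>n. interior (F n) \<noteq> {}"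
  proof (rule ccontr)
    assume "\<not> ?thesis"
    then have "euclidean interior_of \<Union>(range F) = {}"
      by (intro Baire_category_alt) (auto simp: completely_metrizable_space_euclidean assms(1))
    then show False
      using assms(2) by simp
  qed
  then obtain n y where "y \<in> interior (F n)"
    by blast
  then obtain r where "r > 0" "ball y r \<subseteq> F n"
    by (meson interior_subset open_contains_ball open_interior subset_trans)
  then show thesis
    using that by blast
qed

lemma uniform_boundedness:
  fixes f :: "'i \<Rightarrow> 'a::banach \<Rightarrow> 'b::real_normed_vector"
  assumes bl: "\<And>i. i \<in> I \<Longrightarrow> bounded_linear (f i)"
    and pointwise: "\<And>y. \<exists>M. \<forall>i\<in>I. norm (f i y) \<le> M"
  shows "\<exists>M. \<forall>i\<in>I. \<forall>y. norm (f i y) \<le> M * norm y"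
proof -
  define F where "F n = {y. \<forall>i\<in>I. norm (f i y) \<le> real n}" for n :: nat
  have "closed (F n)" for n
  proof -
    have "F n = (\<Inter>i\<in>I. {y. norm (f i y) \<le> real n})"
      by (auto simp: F_def)
    moreover have "closed {y. norm (f i y) \<le> real n}" if "i \<in> I" for i
      using bl[OF that] by (intro closed_Collect_le continuous_intros) (auto intro: linear_continuous_on)
    ultimately show ?thesis
      by auto
  qed
  moreover have "y \<in> (\<Union>n. F n)" for y
  proof -
    obtain M where "\<forall>i\<in>I. norm (f i y) \<le> M"
      using pointwise by blast
    moreover obtain n :: nat where "M \<le> real n"
      using real_arch_simple by blast
    ultimately have "y \<in> F n"
      by (auto simp: F_def intro: order_trans)
    then show ?thesis
      by blast
  qed
  ultimately obtain n y0 r where r: "r > 0" "ball y0 r \<subseteq> F n"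
    by (metis Baire_closed_cover_ball UNIV_eq_I)
  have small: "norm (f i z) \<le> 2 * real n" if i: "i \<in> I" and "norm z < r" for i z
  proof -
    have "y0 + z \<in> F n" "y0 \<in> F n"
      using r \<open>norm z < r\<close> by (auto simp: dist_norm)
    then have "norm (f i (y0 + z)) \<le> real n" "norm (f i y0) \<le> real n"
      using i by (auto simp: F_def)
    moreover have "f i z = f i (y0 + z) - f i y0"
      by (simp add: linear_add[OF bounded_linear.linear[OF bl[OF i]]])
    ultimately show ?thesis
      by (metis norm_triangle_ineq4 add_mono mult_2 order_trans)
  qed
  have "norm (f i y) \<le> 4 * real n / r * norm y" if i: "i \<in> I" for i y
  proof (cases "y = 0")
    case False
    define t where "t = r / (2 * norm y)"
    have "t > 0" "norm (t *\<^sub>R y) < r"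
      using False r by (simp_all add: t_def)
    then have "t * norm (f i y) \<le> 2 * real n"
      using small[OF i] by (metis linear_scale[OF bounded_linear.linear[OF bl[OF i]]] norm_scaleR abs_of_pos)
    then show ?thesis
      using False r by (simp add: t_def field_simps)
  qed (simp add: linear_0[OF bounded_linear.linear[OF bl[OF i]]])
  then show ?thesis
    by blast
qed

locale cstar_hilbert_module =
  fixes st :: "'a::{real_normed_algebra,banach} \<Rightarrow> 'a"
    and smA :: "complex \<Rightarrow> 'a \<Rightarrow> 'a"
    and rm :: "'e::banach \<Rightarrow> 'a \<Rightarrow> 'e"
    and ip :: "'e \<Rightarrow> 'e \<Rightarrow> 'a"
    and smE :: "complex \<Rightarrow> 'e \<Rightarrow> 'e"
  assumes hilbert_module: "hilbert_module st smA rm ip smE"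
begin

lemma smA_of_real: "smA (complex_of_real r) a = r *\<^sub>R a"
  and smA_add_right: "smA c (a + b) = smA c a + smA c b"
  and smA_smA: "smA c (smA d a) = smA (c * d) a"
  and norm_smA: "norm (smA c a) = cmod c * norm a"
  and st_add: "st (a + b) = st a + st b"
  and st_smA: "st (smA c a) = smA (cnj c) (st a)"
  and st_mult: "st (a * b) = st b * st a"
  using hilbert_module unfolding hilbert_module_def cstar_algebra_def by auto

lemma smE_of_real: "smE (complex_of_real r) x = r *\<^sub>R x"
  and smE_add_right: "smE c (x + y) = smE c x + smE c y"
  and smE_smE: "smE c (smE d x) = smE (c * d) x"
  and ip_add_right: "ip x (y + z) = ip x y + ip x z"
  and ip_smE_right: "ip x (smE c y) = smA c (ip x y)"
  and ip_rm_right: "ip x (rm y a) = ip x y * a"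
  and st_ip: "st (ip x y) = ip y x"
  and ip_self_eq_0: "ip x x = 0 \<Longrightarrow> x = 0"
  and norm_eq_sqrt_ip: "norm x = sqrt (norm (ip x x))"
  using hilbert_module unfolding hilbert_module_def by auto

lemma linear_smA: "linear (smA c)"
  by (rule linearI) (simp_all add: smA_add_right smA_smA mult.commute flip: smA_of_real)

lemma linear_smE: "linear (smE c)"
  by (rule linearI) (simp_all add: smE_add_right smE_smE mult.commute flip: smE_of_real)

lemma linear_st: "linear st"
  by (rule linearI) (simp_all add: st_add st_smA flip: smA_of_real)

lemma linear_ip_right: "linear (ip x)"
  by (rule linearI) (simp_all add: ip_add_right ip_smE_right flip: smA_of_real smE_of_real)

lemma linear_ip_left: "linear (\<lambda>y. ip y x)"
  using linear_compose[OF linear_ip_right linear_st] by (simp add: o_def st_ip)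

lemmas smA_diff = linear_diff[OF linear_smA]
  and smE_diff = linear_diff[OF linear_smE]
lemmas ip_diff_right = linear_diff[OF linear_ip_right]
  and ip_scaleR_right = linear_scale[OF linear_ip_right]
  and ip_zero_right = linear_0[OF linear_ip_right]
  and ip_minus_right = linear_neg[OF linear_ip_right]
lemmas ip_add_left = linear_add[OF linear_ip_left]
  and ip_diff_left = linear_diff[OF linear_ip_left]
  and ip_scaleR_left = linear_scale[OF linear_ip_left]
  and ip_zero_left = linear_0[OF linear_ip_left]
  and ip_minus_left = linear_neg[OF linear_ip_left]

lemma smA_minus_left: "smA (- c) a = - smA c a"
proof -
  have "smA (- c) a = smA (complex_of_real (- 1)) (smA c a)"
    by (simp add: smA_smA)
  then show ?thesis
    by (simp only: smA_of_real) simp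
qed

lemma ip_smE_left: "ip (smE c x) y = smA (cnj c) (ip x y)"
  by (metis st_ip ip_smE_right st_smA)

lemma ip_rm_left: "ip (rm x a) y = st a * ip x y"
  by (metis st_ip ip_rm_right st_mult)

lemma norm_ip_self: "norm (ip x x) = (norm x)\<^sup>2"
  using norm_eq_sqrt_ip[of x] by simp

lemma ip_eqI: "(\<And>w. ip w x = ip w y) \<Longrightarrow> x = y"
  using ip_self_eq_0[of "x - y"] by (simp add: ip_diff_right)

lemma norm_smE: "norm (smE c x) = cmod c * norm x"
proof -
  have "ip (smE c x) (smE c x) = smA (c * cnj c) (ip x x)"
    by (simp add: ip_smE_left ip_smE_right smA_smA mult.commute)
  then have "(norm (smE c x))\<^sup>2 = cmod (c * cnj c) * (norm x)\<^sup>2"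
    by (metis norm_ip_self norm_smA)
  then have "(norm (smE c x))\<^sup>2 = (cmod c * norm x)\<^sup>2"
    by (simp add: norm_mult power2_eq_square)
  then show ?thesis
    by (simp add: power2_eq_iff_nonneg)
qed

lemma norm_ip_le_polarization:
  "norm (ip x y) \<le> (norm x + norm y)\<^sup>2 + (norm x)\<^sup>2 + (norm y)\<^sup>2"
proof -
  define s where "s x y = ip x y + ip y x" for x y
  have s_bound: "norm (s x y) \<le> (norm x + norm y)\<^sup>2 + (norm x)\<^sup>2 + (norm y)\<^sup>2" for x y
  proof -
    have "s x y = ip (x + y) (x + y) - ip x x - ip y y"
      by (simp add: s_def ip_add_left ip_add_right algebra_simps)
    then have "norm (s x y) \<le> norm (ip (x + y) (x + y) - ip x x) + norm (ip y y)"
      by (simp add: norm_triangle_ineq4)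
    also have "\<dots> \<le> norm (ip (x + y) (x + y)) + norm (ip x x) + norm (ip y y)"
      by (simp add: norm_triangle_ineq4)
    also have "\<dots> \<le> (norm x + norm y)\<^sup>2 + (norm x)\<^sup>2 + (norm y)\<^sup>2"
      unfolding norm_ip_self by (simp add: norm_triangle_ineq power_mono)
    finally show ?thesis .
  qed
  \<comment> \<open>2 ip x y = s x y - i s x (i y)\<close>
  have "smA (- \<i>) (s x (smE \<i> y)) = ip x y - ip y x"
    by (simp add: s_def ip_smE_left ip_smE_right smA_add_right smA_smA
        smA_of_real[of 1, simplified] smA_of_real[of "-1", simplified])
  then have "2 *\<^sub>R ip x y = s x y + smA (- \<i>) (s x (smE \<i> y))"
    by (simp add: s_def scaleR_2)
  then have "2 * norm (ip x y) \<le> norm (s x y) + norm (smA (- \<i>) (s x (smE \<i> y)))"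
    by (metis norm_scaleR abs_numeral norm_triangle_ineq)
  also have "\<dots> = norm (s x y) + norm (s x (smE \<i> y))"
    by (simp add: norm_smA)
  also have "\<dots> \<le> 2 * ((norm x + norm y)\<^sup>2 + (norm x)\<^sup>2 + (norm y)\<^sup>2)"
    using s_bound[of x y] s_bound[of x "smE \<i> y"] by (simp add: norm_smE)
  finally show ?thesis
    by simp
qed

lemma norm_ip_le: "norm (ip x y) \<le> 6 * norm x * norm y"
proof (cases "x = 0 \<or> y = 0")
  case True
  then show ?thesis
    by (auto simp: ip_zero_left ip_zero_right)
next
  case False
  define a b where "a = norm x" and "b = norm y"
  have ab: "a > 0" "b > 0"
    using False by (auto simp: a_def b_def)
  have "ip x y = (a * b) *\<^sub>R ip ((1 / a) *\<^sub>R x) ((1 / b) *\<^sub>R y)"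
    using ab by (simp add: ip_scaleR_left ip_scaleR_right)
  moreover have "norm (ip ((1 / a) *\<^sub>R x) ((1 / b) *\<^sub>R y)) \<le> 6"
    using norm_ip_le_polarization[of "(1 / a) *\<^sub>R x" "(1 / b) *\<^sub>R y"] ab
    by (simp add: a_def b_def)
  ultimately show ?thesis
    using ab by (simp add: a_def b_def mult_left_mono mult.assoc)
qed

lemma bounded_linear_ip_right: "bounded_linear (ip x)"
proof (rule bounded_linear_intro[where K = "6 * norm x"])
  show "norm (ip x y) \<le> norm y * (6 * norm x)" for y
    using norm_ip_le[of x y] by (simp add: mult_ac)
qed (simp_all add: ip_add_right ip_scaleR_right)

lemma bounded_linear_ip_left: "bounded_linear (\<lambda>y. ip y x)"
proof (rule bounded_linear_intro[where K = "6 * norm x"])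
  show "norm (ip y x) \<le> norm y * (6 * norm x)" for y
    using norm_ip_le[of y x] by (simp add: mult_ac)
qed (simp_all add: ip_add_left ip_scaleR_left)

abbreviation adjoint_pair :: "('e \<Rightarrow> 'e) \<Rightarrow> ('e \<Rightarrow> 'e) \<Rightarrow> bool" where
  "adjoint_pair T T' \<equiv> \<forall>x y. ip (T x) y = ip x (T' y)"

lemma adjoint_pair_swap: "adjoint_pair T T' \<Longrightarrow> ip x (T y) = ip (T' x) y"
  by (metis st_ip)

lemma adjoint_pair_sym: "adjoint_pair T T' \<Longrightarrow> adjoint_pair T' T"
  by (metis st_ip)

lemma adjointable_iff_adjoint_pair: "adjointable ip T \<longleftrightarrow> (\<exists>T'. adjoint_pair T T')"
  by (simp add: adjointable_def)

lemma adjoint_pair_adjoint: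
  assumes "adjointable ip T"
  shows "adjoint_pair T (adjoint ip T)"
  using someI_ex[OF assms[unfolded adjointable_def]] unfolding adjoint_def .

lemma adjoint_eqI:
  assumes "adjoint_pair T T'"
  shows "adjoint ip T = T'"
proof (rule ext, rule ip_eqI)
  fix x w
  have "adjoint_pair T (adjoint ip T)"
    using assms adjoint_pair_adjoint adjointable_iff_adjoint_pair by blast
  then show "ip w (adjoint ip T x) = ip w (T' x)"
    using assms by metis
qed

lemma linear_adjoint_pair:
  assumes "adjoint_pair T T'"
  shows "linear T"
proof (rule linearI)
  show "T (x + y) = T x + T y" for x y
    by (rule ip_eqI) (simp add: adjoint_pair_swap[OF assms] ip_add_right)
  show "T (r *\<^sub>R x) = r *\<^sub>R T x" for r x
    by (rule ip_eqI) (simp add: adjoint_pair_swap[OF assms] ip_scaleR_right)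
qed

lemma adjoint_pair_smE:
  assumes "adjoint_pair T T'"
  shows "T (smE c x) = smE c (T x)"
  by (rule ip_eqI) (simp add: adjoint_pair_swap[OF assms] ip_smE_right)

lemma adjoint_pair_rm:
  assumes "adjoint_pair T T'"
  shows "T (rm x a) = rm (T x) a"
  by (rule ip_eqI) (simp add: adjoint_pair_swap[OF assms] ip_rm_right)

lemma adjoint_pair_funpow: "adjoint_pair T T' \<Longrightarrow> adjoint_pair (T ^^ n) (T' ^^ n)"
  by (induction n) (simp_all add: funpow_swap1)

lemma adjoint_pair_norm_le:
  assumes T: "adjoint_pair T T'" and bound: "\<And>x. norm (T x) \<le> C * norm x"
  shows "norm (T' y) \<le> 6 * C * norm y"
proof (cases "T' y = 0")
  case True
  then show ?thesis
    using order_trans[OF norm_ge_zero bound[of y]] by simp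
next
  case False
  have "(norm (T' y))\<^sup>2 = norm (ip (T (T' y)) y)"
    using T by (simp flip: norm_ip_self)
  also have "\<dots> \<le> 6 * norm (T (T' y)) * norm y"
    by (rule norm_ip_le)
  also have "\<dots> \<le> 6 * (C * norm (T' y)) * norm y"
    using bound by (intro mult_right_mono mult_left_mono) auto
  finally show ?thesis
    using False by (simp add: power2_eq_square mult_ac)
qed

lemma bounded_linear_adjoint_pair:
  assumes T: "adjoint_pair T T'"
  shows "bounded_linear T"
proof -
  have "\<exists>M. \<forall>x\<in>{x. norm x \<le> 1}. \<forall>y. norm (ip (T x) y) \<le> M * norm y"
  proof (rule uniform_boundedness)
    show "bounded_linear (ip (T x))" for x
      by (rule bounded_linear_ip_right)
    show "\<exists>M. \<forall>x\<in>{x. norm x \<le> 1}. norm (ip (T x) y) \<le> M" for y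
    proof (intro exI ballI)
      fix x :: 'e
      assume "x \<in> {x. norm x \<le> 1}"
      then have "6 * norm x * norm (T' y) \<le> 6 * norm (T' y)"
        by (simp add: mult_left_le_one_le)
      then show "norm (ip (T x) y) \<le> 6 * norm (T' y)"
        using T norm_ip_le[of x "T' y"] by simp
    qed
  qed
  then obtain M where M: "\<And>x y. norm x \<le> 1 \<Longrightarrow> norm (ip (T x) y) \<le> M * norm y"
    by blast
  have unit_ball: "norm (T x) \<le> \<bar>M\<bar>" if "norm x \<le> 1" for x
  proof (cases "T x = 0")
    case False
    have "(norm (T x))\<^sup>2 \<le> M * norm (T x)"
      using M[OF that, of "T x"] by (simp add: norm_ip_self)
    then show ?thesis
      using False by (simp add: power2_eq_square)
  qed simp
  have lin: "linear T"
    by (rule linear_adjoint_pair[OF T])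
  show ?thesis
  proof (rule bounded_linear_intro[where K = "\<bar>M\<bar>"])
    show "norm (T x) \<le> norm x * \<bar>M\<bar>" for x
    proof (cases "x = 0")
      case False
      have "T x = norm x *\<^sub>R T ((1 / norm x) *\<^sub>R x)"
        using False by (simp add: linear_scale[OF lin])
      then show ?thesis
        using False unit_ball[of "(1 / norm x) *\<^sub>R x"] by (simp add: mult_left_mono)
    qed (simp add: linear_0[OF lin])
  qed (simp_all add: linear_add[OF lin] linear_scale[OF lin])
qed

lemma adjoint_pair_theta_sum: "adjoint_pair (theta_sum rm ip xs) (theta_sum rm ip (map prod.swap xs))"
  by (induction xs)
    (auto simp: ip_add_left ip_add_right ip_rm_left ip_rm_right st_ip ip_zero_left ip_zero_right)

lemma bounded_linear_theta_sum: "bounded_linear (theta_sum rm ip xs)"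
  by (rule bounded_linear_adjoint_pair[OF adjoint_pair_theta_sum])

lemma theta_sum_compose_left:
  assumes B: "adjoint_pair B B'"
  shows "B (theta_sum rm ip xs z) = theta_sum rm ip (map (\<lambda>(x, y). (B x, y)) xs) z"
  by (induction xs) (auto simp: linear_add[OF linear_adjoint_pair[OF B]]
      linear_0[OF linear_adjoint_pair[OF B]] adjoint_pair_rm[OF B])

lemma theta_sum_compose_right:
  assumes B: "adjoint_pair B B'"
  shows "theta_sum rm ip xs (B z) = theta_sum rm ip (map (\<lambda>(x, y). (x, B' y)) xs) z"
  by (induction xs) (auto simp: adjoint_pair_swap[OF B])

lemma compact_op_iff:
  "compact_op rm ip K \<longleftrightarrow>
     adjointable ip K \<and> (\<forall>e>0. \<exists>xs. onorm (\<lambda>z. K z - theta_sum rm ip xs z) < e)"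
  unfolding compact_op_def finite_rank_op_iff_theta_sum by blast

lemma compact_op_bounded_linear: "compact_op rm ip K \<Longrightarrow> bounded_linear K"
  by (auto simp: compact_op_iff adjointable_iff_adjoint_pair intro: bounded_linear_adjoint_pair)

lemma compact_op_approx:
  assumes K: "compact_op rm ip K" and "C \<ge> 0" "e > 0"
  obtains xs where "C * onorm (\<lambda>z. K z - theta_sum rm ip xs z) < e"
proof -
  have "e / (C + 1) > 0"
    using \<open>C \<ge> 0\<close> \<open>e > 0\<close> by simp
  then obtain xs where xs: "onorm (\<lambda>z. K z - theta_sum rm ip xs z) < e / (C + 1)"
    using K unfolding compact_op_iff by blast
  have "0 \<le> onorm (\<lambda>z. K z - theta_sum rm ip xs z)"
    by (intro onorm_pos_le bounded_linear_sub compact_op_bounded_linear[OF K] bounded_linear_theta_sum)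
  then have "C * onorm (\<lambda>z. K z - theta_sum rm ip xs z) \<le> C * (e / (C + 1))"
    using xs \<open>C \<ge> 0\<close> by (intro mult_left_mono) auto
  also have "\<dots> < e"
    using \<open>C \<ge> 0\<close> \<open>e > 0\<close> by (simp add: field_simps)
  finally show thesis
    using that by blast
qed

lemma compact_op_zero: "compact_op rm ip (\<lambda>x. 0)"
  unfolding compact_op_iff adjointable_iff_adjoint_pair
  by (auto simp: ip_zero_left ip_zero_right onorm_zero intro!: exI[of _ "\<lambda>x. 0"] exI[of _ "[]"])

lemma compact_op_add:
  assumes K: "compact_op rm ip K" and L: "compact_op rm ip L"
  shows "compact_op rm ip (\<lambda>x. K x + L x)"
  unfolding compact_op_iff
proof (intro conjI allI impI)
  obtain K' L' where "adjoint_pair K K'" "adjoint_pair L L'"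
    using K L unfolding compact_op_iff adjointable_iff_adjoint_pair by blast
  then show "adjointable ip (\<lambda>x. K x + L x)"
    unfolding adjointable_iff_adjoint_pair
    by (intro exI[of _ "\<lambda>y. K' y + L' y"]) (simp add: ip_add_left ip_add_right)
  fix e :: real
  assume "e > 0"
  obtain xs where xs: "2 * onorm (\<lambda>z. K z - theta_sum rm ip xs z) < e"
    using compact_op_approx[OF K _ \<open>e > 0\<close>, of 2] by auto
  obtain ys where ys: "2 * onorm (\<lambda>z. L z - theta_sum rm ip ys z) < e"
    using compact_op_approx[OF L _ \<open>e > 0\<close>, of 2] by auto
  have "bounded_linear (\<lambda>z. K z - theta_sum rm ip xs z)"
    and "bounded_linear (\<lambda>z. L z - theta_sum rm ip ys z)"
    by (intro bounded_linear_sub compact_op_bounded_linear K L bounded_linear_theta_sum)+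
  from onorm_triangle[OF this]
  have "onorm (\<lambda>z. K z + L z - theta_sum rm ip (xs @ ys) z) \<le>
      onorm (\<lambda>z. K z - theta_sum rm ip xs z) + onorm (\<lambda>z. L z - theta_sum rm ip ys z)"
    by (simp add: theta_sum_append algebra_simps)
  then show "\<exists>zs. onorm (\<lambda>z. K z + L z - theta_sum rm ip zs z) < e"
    using xs ys by (intro exI[of _ "xs @ ys"]) linarith
qed

lemma compact_op_compose_left:
  assumes K: "compact_op rm ip K" and B: "adjoint_pair B B'"
  shows "compact_op rm ip (\<lambda>x. B (K x))"
  unfolding compact_op_iff
proof (intro conjI allI impI)
  obtain K' where "adjoint_pair K K'"
    using K unfolding compact_op_iff adjointable_iff_adjoint_pair by blast
  with B show "adjointable ip (\<lambda>x. B (K x))"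
    unfolding adjointable_iff_adjoint_pair by (intro exI[of _ "\<lambda>y. K' (B' y)"]) simp
  fix e :: real
  assume "e > 0"
  have blB: "bounded_linear B"
    by (rule bounded_linear_adjoint_pair[OF B])
  obtain xs where xs: "onorm B * onorm (\<lambda>z. K z - theta_sum rm ip xs z) < e"
    using compact_op_approx[OF K onorm_pos_le[OF blB] \<open>e > 0\<close>] by blast
  have "(\<lambda>z. B (K z) - theta_sum rm ip (map (\<lambda>(x, y). (B x, y)) xs) z) =
        B \<circ> (\<lambda>z. K z - theta_sum rm ip xs z)"
    by (simp add: fun_eq_iff linear_diff[OF linear_adjoint_pair[OF B]] theta_sum_compose_left[OF B])
  then have "onorm (\<lambda>z. B (K z) - theta_sum rm ip (map (\<lambda>(x, y). (B x, y)) xs) z)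
      \<le> onorm B * onorm (\<lambda>z. K z - theta_sum rm ip xs z)"
    using onorm_compose[OF blB bounded_linear_sub[OF compact_op_bounded_linear[OF K]
        bounded_linear_theta_sum]] by simp
  then show "\<exists>xs. onorm (\<lambda>z. B (K z) - theta_sum rm ip xs z) < e"
    using xs by (meson le_less_trans)
qed

lemma compact_op_compose_right:
  assumes K: "compact_op rm ip K" and B: "adjoint_pair B B'"
  shows "compact_op rm ip (\<lambda>x. K (B x))"
  unfolding compact_op_iff
proof (intro conjI allI impI)
  obtain K' where "adjoint_pair K K'"
    using K unfolding compact_op_iff adjointable_iff_adjoint_pair by blast
  with B show "adjointable ip (\<lambda>x. K (B x))"
    unfolding adjointable_iff_adjoint_pair by (intro exI[of _ "\<lambda>y. B' (K' y)"]) simp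
  fix e :: real
  assume "e > 0"
  have blB: "bounded_linear B"
    by (rule bounded_linear_adjoint_pair[OF B])
  obtain xs where xs: "onorm B * onorm (\<lambda>z. K z - theta_sum rm ip xs z) < e"
    using compact_op_approx[OF K onorm_pos_le[OF blB] \<open>e > 0\<close>] by blast
  have "(\<lambda>z. K (B z) - theta_sum rm ip (map (\<lambda>(x, y). (x, B' y)) xs) z) =
        (\<lambda>z. K z - theta_sum rm ip xs z) \<circ> B"
    by (simp add: fun_eq_iff theta_sum_compose_right[OF B])
  then have "onorm (\<lambda>z. K (B z) - theta_sum rm ip (map (\<lambda>(x, y). (x, B' y)) xs) z)
      \<le> onorm B * onorm (\<lambda>z. K z - theta_sum rm ip xs z)"
    using onorm_compose[OF bounded_linear_sub[OF compact_op_bounded_linear[OF K]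
        bounded_linear_theta_sum] blB] by (simp add: mult.commute)
  then show "\<exists>xs. onorm (\<lambda>z. K (B z) - theta_sum rm ip xs z) < e"
    using xs by (meson le_less_trans)
qed

lemma compact_op_diff:
  assumes "compact_op rm ip K" and "compact_op rm ip L"
  shows "compact_op rm ip (\<lambda>x. K x - L x)"
proof -
  have "adjoint_pair uminus uminus"
    by (simp add: ip_minus_left ip_minus_right)
  then have "compact_op rm ip (\<lambda>x. - L x)"
    by (rule compact_op_compose_left[OF assms(2)])
  from compact_op_add[OF assms(1) this] show ?thesis
    by simp
qed

lemma neumann_series_inverse:
  assumes X: "adjoint_pair X X'" and small: "onorm X < 1"
  obtains V V' where "adjoint_pair V V'" "\<And>x. V (x - X x) = x" "\<And>x. V x - X (V x) = x"
proof -
  have blX: "bounded_linear X"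
    by (rule bounded_linear_adjoint_pair[OF X])
  define q where "q = onorm X"
  have q: "0 \<le> q" "q < 1"
    using onorm_pos_le[OF blX] small by (simp_all add: q_def)
  have pow: "norm ((X ^^ n) x) \<le> q ^ n * norm x" for n x
  proof (induction n)
    case (Suc n)
    have "norm ((X ^^ Suc n) x) \<le> q * norm ((X ^^ n) x)"
      using onorm[OF blX] by (simp add: q_def)
    also have "\<dots> \<le> q * (q ^ n * norm x)"
      using Suc q by (intro mult_left_mono)
    finally show ?case
      by (simp add: mult.assoc)
  qed simp
  have pow': "norm ((X' ^^ n) y) \<le> 6 * q ^ n * norm y" for n y
    using adjoint_pair_norm_le[OF adjoint_pair_funpow[OF X] pow] .
  have geometric: "summable (\<lambda>n. c * q ^ n)" for c
    using q by (intro summable_mult summable_geometric) simp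
  have sX: "summable (\<lambda>n. (X ^^ n) x)" for x
    by (rule summable_comparison_test[OF _ geometric[of "norm x"]])
      (use pow in \<open>auto simp: mult.commute\<close>)
  have sX': "summable (\<lambda>n. (X' ^^ n) y)" for y
    by (rule summable_comparison_test[OF _ geometric[of "6 * norm y"]])
      (use pow' in \<open>auto simp: mult_ac\<close>)
  define V where "V x = (\<Sum>n. (X ^^ n) x)" for x
  define V' where "V' y = (\<Sum>n. (X' ^^ n) y)" for y
  have V: "adjoint_pair V V'"
  proof (intro allI)
    fix x y
    have "ip (V x) y = (\<Sum>n. ip ((X ^^ n) x) y)"
      unfolding V_def using bounded_linear.suminf[OF bounded_linear_ip_left sX] .
    also have "\<dots> = (\<Sum>n. ip x ((X' ^^ n) y))"
      using adjoint_pair_funpow[OF X] by simp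
    also have "\<dots> = ip x (V' y)"
      unfolding V'_def using bounded_linear.suminf[OF bounded_linear_ip_right sX', symmetric] .
    finally show "ip (V x) y = ip x (V' y)" .
  qed
  have shift: "(\<Sum>n. (X ^^ Suc n) x) = V x - x" for x
    using suminf_split_head[OF sX[of x]] by (simp add: V_def)
  have "V (X x) = (\<Sum>n. (X ^^ Suc n) x)" for x
    unfolding V_def by (simp add: funpow_Suc_right del: funpow.simps)
  then have "V (x - X x) = x" for x
    using shift linear_diff[OF linear_adjoint_pair[OF V]] by simp
  moreover have "X (V x) = (\<Sum>n. (X ^^ Suc n) x)" for x
    unfolding V_def using bounded_linear.suminf[OF blX sX] by simp
  then have "V x - X (V x) = x" for x
    using shift by simp
  ultimately show thesis
    using that V by blast
qed

lemma fredholm_op_if_parametrices: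
  assumes T: "adjoint_pair T T'" and L: "adjoint_pair L L'" and R: "adjoint_pair R R'"
    and left: "compact_op rm ip (\<lambda>x. L (T x) - x)"
    and right: "compact_op rm ip (\<lambda>x. T (R x) - x)"
  shows "fredholm_op rm ip T"
proof -
  \<comment> \<open>Modulo compacts L = L T R = R, so L is a right parametrix as well.\<close>
  have "compact_op rm ip (\<lambda>x. T (L (x - T (R x))) + T (L (T (R x)) - R x) + (T (R x) - x))"
  proof (intro compact_op_add)
    have "compact_op rm ip (\<lambda>x. x - T (R x))"
      using compact_op_diff[OF compact_op_zero right] by simp
    moreover have "adjoint_pair (\<lambda>x. T (L x)) (\<lambda>y. L' (T' y))"
      using T L by simp
    ultimately show "compact_op rm ip (\<lambda>x. T (L (x - T (R x))))"
      by (rule compact_op_compose_left)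
    show "compact_op rm ip (\<lambda>x. T (L (T (R x)) - R x))"
      by (rule compact_op_compose_left[OF compact_op_compose_right[OF left R] T])
  qed (rule right)
  moreover have "T (L (x - T (R x))) + T (L (T (R x)) - R x) + (T (R x) - x) = T (L x) - x" for x
    by (simp add: linear_diff[OF linear_adjoint_pair[OF T]] linear_diff[OF linear_adjoint_pair[OF L]])
  ultimately have "compact_op rm ip (\<lambda>x. T (L x) - x)"
    by simp
  then show ?thesis
    unfolding fredholm_op_def adjointable_iff_adjoint_pair using T L left by blast
qed

lemma calkin_norm_lessE:
  assumes "calkin_norm rm ip S < r"
  obtains K where "compact_op rm ip K" "onorm (\<lambda>x. S x + K x) < r"
proof -
  have "{onorm (\<lambda>x. S x + K x) | K. compact_op rm ip K} \<noteq> {}"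
    using compact_op_zero by blast
  from cInf_lessD[OF this assms[unfolded calkin_norm_def]] show thesis
    using that by blast
qed

lemma calkin_norm_le_onorm:
  assumes S: "adjointable ip S" and K: "compact_op rm ip K"
  shows "calkin_norm rm ip S \<le> onorm (\<lambda>x. S x + K x)"
  unfolding calkin_norm_def
proof (rule cInf_lower)
  show "onorm (\<lambda>x. S x + K x) \<in> {onorm (\<lambda>x. S x + K x) | K. compact_op rm ip K}"
    using K by blast
  have "bounded_linear S"
    using S by (auto simp: adjointable_iff_adjoint_pair intro: bounded_linear_adjoint_pair)
  then have "0 \<le> onorm (\<lambda>x. S x + L x)" if "compact_op rm ip L" for L
    by (intro onorm_pos_le bounded_linear_add compact_op_bounded_linear[OF that])
  then show "bdd_below {onorm (\<lambda>x. S x + K x) | K. compact_op rm ip K}"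
    by (auto intro: bdd_belowI[of _ 0])
qed

lemma calkin_norm_scaleR_less:
  assumes S: "adjointable ip S" and less: "calkin_norm rm ip S < r" and "c > 0"
  shows "calkin_norm rm ip (\<lambda>x. c *\<^sub>R S x) < c * r"
proof -
  obtain K where K: "compact_op rm ip K" and SK: "onorm (\<lambda>x. S x + K x) < r"
    using calkin_norm_lessE[OF less] by blast
  obtain S' where S': "adjoint_pair S S'"
    using S adjointable_iff_adjoint_pair by blast
  have scale: "adjoint_pair (\<lambda>x. c *\<^sub>R x) (\<lambda>x. c *\<^sub>R x)"
    by (simp add: ip_scaleR_left ip_scaleR_right)
  have "adjointable ip (\<lambda>x. c *\<^sub>R S x)"
    unfolding adjointable_iff_adjoint_pair using S' scale
    by (intro exI[of _ "\<lambda>y. S' (c *\<^sub>R y)"]) simp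
  then have "calkin_norm rm ip (\<lambda>x. c *\<^sub>R S x) \<le> onorm (\<lambda>x. c *\<^sub>R S x + c *\<^sub>R K x)"
    by (rule calkin_norm_le_onorm[OF _ compact_op_compose_left[OF K scale]])
  also have "\<dots> = c * onorm (\<lambda>x. S x + K x)"
    using onorm_scaleR[OF bounded_linear_add[OF bounded_linear_adjoint_pair[OF S']
          compact_op_bounded_linear[OF K]], of c] \<open>c > 0\<close>
    by (simp add: scaleR_right_distrib)
  also have "\<dots> < c * r"
    using SK \<open>c > 0\<close> by simp
  finally show ?thesis .
qed

lemma fredholm_op_if_square_eq_one_minus_square:
  assumes T: "adjoint_pair T T'" and R: "adjoint_pair R R'"
    and small: "calkin_norm rm ip R < 1" and square: "\<And>x. T (T x) = x - R (R x)"
  shows "fredholm_op rm ip T"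
proof -
  obtain K where K: "compact_op rm ip K" and RK: "onorm (\<lambda>x. R x + K x) < 1"
    using calkin_norm_lessE[OF small] by blast
  obtain K' where K': "adjoint_pair K K'"
    using K unfolding compact_op_iff adjointable_iff_adjoint_pair by blast
  define W where "W x = R x + K x" for x
  have W: "adjoint_pair W (\<lambda>y. R' y + K' y)"
    using R K' by (simp add: W_def ip_add_left ip_add_right)
  have blW: "bounded_linear W"
    by (rule bounded_linear_adjoint_pair[OF W])
  have "onorm (W \<circ> W) \<le> onorm W * onorm W"
    by (rule onorm_compose[OF blW blW])
  also have "\<dots> < 1"
    using RK onorm_pos_le[OF blW] unfolding W_def[abs_def]
    by (metis mult_left_le_one_le less_eq_real_def order_le_less_trans)
  finally obtain V V' where V: "adjoint_pair V V'"
    and inv_left: "\<And>x. V (x - W (W x)) = x" and inv_right: "\<And>x. V x - W (W (V x)) = x"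
    using neumann_series_inverse[of "\<lambda>x. W (W x)" "\<lambda>y. R' (R' y + K' y) + K' (R' y + K' y)"] W
    by (auto simp: o_def)
  define Kc where "Kc x = R (K x) + K (W x)" for x
  have Kc: "compact_op rm ip Kc"
    unfolding Kc_def
    by (intro compact_op_add compact_op_compose_left[OF K R] compact_op_compose_right[OF K W])
  have square_W: "T (T x) = x - W (W x) + Kc x" for x
    using square[of x] by (simp add: W_def Kc_def linear_add[OF linear_adjoint_pair[OF R]])
  show ?thesis
  proof (rule fredholm_op_if_parametrices[OF T])
    show "adjoint_pair (\<lambda>x. V (T x)) (\<lambda>y. T' (V' y))"
      and "adjoint_pair (\<lambda>x. T (V x)) (\<lambda>y. V' (T' y))"
      using T V by simp_all
    have "V (T (T x)) - x = V (Kc x)" for x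
      using inv_left[of x] by (simp add: square_W linear_add[OF linear_adjoint_pair[OF V]])
    then show "compact_op rm ip (\<lambda>x. V (T (T x)) - x)"
      using compact_op_compose_left[OF Kc V] by simp
    have "T (T (V x)) - x = Kc (V x)" for x
      using inv_right[of x] by (simp add: square_W algebra_simps)
    then show "compact_op rm ip (\<lambda>x. T (T (V x)) - x)"
      using compact_op_compose_right[OF Kc V] by simp
  qed
qed

lemma adjoint_pair_imaginary_multiple:
  assumes u: "adjoint_pair u u'" and "cnj c = - c"
  shows "adjoint_pair (\<lambda>x. smE c (u x - u' x)) (\<lambda>x. smE c (u x - u' x))"
  using assms adjoint_pair_sym[OF u]
  by (simp add: ip_smE_left ip_smE_right ip_diff_left ip_diff_right smA_minus_left smA_diff)

lemma imaginary_part_square: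
  fixes u u' :: "'e \<Rightarrow> 'e"
  defines "T \<equiv> \<lambda>x. smE (1 / (2 * \<i>)) (u x - u' x)"
    and "R \<equiv> \<lambda>x. (1 / 2 :: real) *\<^sub>R (u x + u' x)"
  assumes u: "adjoint_pair u u'" and inv: "\<And>x. u' (u x) = x" "\<And>x. u (u' x) = x"
  shows "T (T x) = x - R (R x)"
proof -
  have u': "adjoint_pair u' u"
    by (rule adjoint_pair_sym[OF u])
  have "T (T x) = smE ((1 / (2 * \<i>)) * (1 / (2 * \<i>))) (u (u x) - x - (x - u' (u' x)))"
    by (simp add: T_def adjoint_pair_smE[OF u] adjoint_pair_smE[OF u'] smE_diff smE_smE inv
        linear_diff[OF linear_adjoint_pair[OF u]] linear_diff[OF linear_adjoint_pair[OF u']])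
  also have "(1 / (2 * \<i>)) * (1 / (2 * \<i>)) = complex_of_real (- 1 / 4)"
    by (simp add: field_simps)
  finally have TT: "T (T x) = (- 1 / 4 :: real) *\<^sub>R (u (u x) - x - (x - u' (u' x)))"
    by (simp only: smE_of_real)
  have RR: "R (R x) = (1 / 4 :: real) *\<^sub>R (u (u x) + x + (x + u' (u' x)))"
    by (simp add: R_def inv scaleR_add_right
        linear_add[OF linear_adjoint_pair[OF u]] linear_add[OF linear_adjoint_pair[OF u']]
        linear_scale[OF linear_adjoint_pair[OF u]] linear_scale[OF linear_adjoint_pair[OF u']])
  show ?thesis
    unfolding TT RR by (simp add: algebra_simps flip: scaleR_add_left)
qed

lemma imaginary_part_anticommute:
  fixes u u' \<gamma> \<gamma>' :: "'e \<Rightarrow> 'e" and c :: complex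
  defines "T \<equiv> \<lambda>x. smE c (u x - u' x)"
  assumes \<gamma>: "adjoint_pair \<gamma> \<gamma>'" and involution: "\<And>x. \<gamma> (\<gamma> x) = x"
    and twist: "\<And>x. \<gamma> (u (\<gamma> x)) = u' x"
  shows "\<gamma> (T x) = - T (\<gamma> x)"
proof -
  have "\<gamma> (u x) = u' (\<gamma> x)" and "\<gamma> (u' x) = u (\<gamma> x)"
    using twist[of "\<gamma> x"] twist[of x] involution by (metis, metis)
  then show ?thesis
    by (simp add: T_def adjoint_pair_smE[OF \<gamma>] linear_diff[OF linear_adjoint_pair[OF \<gamma>]]
        smE_diff)
qed

end

theorem proposition4p18:
  fixes st :: "'a::{real_normed_algebra,banach} \<Rightarrow> 'a"
    and smA :: "complex \<Rightarrow> 'a \<Rightarrow> 'a"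
    and rm :: "'e::banach \<Rightarrow> 'a \<Rightarrow> 'e"
    and ip :: "'e \<Rightarrow> 'e \<Rightarrow> 'a"
    and smE :: "complex \<Rightarrow> 'e \<Rightarrow> 'e"
    and \<gamma>0 u :: "'e \<Rightarrow> 'e"
  assumes "hilbert_module st smA rm ip smE"
    and "sigma_unital st"
    and "countably_generated rm"
    and "selfadjoint_op ip \<gamma>0" and "unitary_op ip \<gamma>0"
    and "unitary_op ip u"
    and "\<forall>x. \<gamma>0 (u (\<gamma>0 x)) = adjoint ip u x"
    and "calkin_norm rm ip (\<lambda>x. u x + adjoint ip u x) < 2"
  shows "selfadjoint_op ip (\<lambda>x. smE (1 / (2 * \<i>)) (u x - adjoint ip u x)) \<and>
         fredholm_op rm ip (\<lambda>x. smE (1 / (2 * \<i>)) (u x - adjoint ip u x)) \<and>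
         (\<forall>x. \<gamma>0 (smE (1 / (2 * \<i>)) (u x - adjoint ip u x))
               = - smE (1 / (2 * \<i>)) (u (\<gamma>0 x) - adjoint ip u (\<gamma>0 x)))"
proof -
  interpret cstar_hilbert_module st smA rm ip smE
    by (rule cstar_hilbert_module.intro) (fact assms(1))
  define u' where "u' = adjoint ip u"
  have u: "adjoint_pair u u'" "\<And>x. u' (u x) = x" "\<And>x. u (u' x) = x"
    using assms(6) adjoint_pair_adjoint unfolding unitary_op_def u'_def by auto
  have \<gamma>: "adjoint_pair \<gamma>0 \<gamma>0" "\<And>x. \<gamma>0 (\<gamma>0 x) = x"
    using assms(4,5) adjoint_pair_adjoint unfolding selfadjoint_op_def unitary_op_def by metis+
  let ?T = "\<lambda>x. smE (1 / (2 * \<i>)) (u x - u' x)"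
  let ?R = "\<lambda>x. (1 / 2 :: real) *\<^sub>R (u x + u' x)"
  have T: "adjoint_pair ?T ?T"
    by (rule adjoint_pair_imaginary_multiple[OF u(1)]) simp
  have "adjoint_pair (\<lambda>x. u x + u' x) (\<lambda>x. u x + u' x)"
    using u(1) adjoint_pair_sym[OF u(1)] by (simp add: ip_add_left ip_add_right ac_simps)
  then have "adjointable ip (\<lambda>x. u x + u' x)" and R: "adjoint_pair ?R ?R"
    by (auto simp: adjointable_iff_adjoint_pair ip_scaleR_left ip_scaleR_right)
  from calkin_norm_scaleR_less[OF this(1), of 2 "1 / 2"] have "calkin_norm rm ip ?R < 1"
    using assms(8) by (simp add: u'_def)
  then have "fredholm_op rm ip ?T"
    using fredholm_op_if_square_eq_one_minus_square[OF T R] imaginary_part_square[OF u] by blast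
  moreover have "selfadjoint_op ip ?T"
    unfolding selfadjoint_op_def adjointable_iff_adjoint_pair adjoint_eqI[OF T]
    using T by (intro conjI exI[of _ ?T]) simp_all
  moreover have "\<gamma>0 (?T x) = - ?T (\<gamma>0 x)" for x
    by (rule imaginary_part_anticommute[OF \<gamma>]) (simp add: assms(7) u'_def)
  ultimately show ?thesis
    unfolding u'_def by blast
qed

end
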